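(* Let $H=\bigcup_{j=1}^n(c_j,d_j)\subset\mathbb R$ with pairwise disjoint closed intervals $[c_j,d_j]$, let $\mathcal B$ be finite and $m\ge2$. Assume for each $\beta\in\mathcal B$: $b_\beta,\theta_\beta\in C^m(\bar H)$, $b_\beta>0$ on $\bar H$, $\theta_\beta(H)\subset H$; and that there exist $\mu\ge1$ and $\kappa<1$ with $|\theta_\omega(x)-\theta_\omega(y)|\le\kappa|x-y|$ for all $\omega\in\mathcal B_\mu$, $x,y\in\bar H$. Let $M_0=\sup\{|D^2\theta_\beta(x)|:\beta\in\mathcal B,x\in\bar H\}$, $\epsilon_0=1$ and $\epsilon_\nu=\sup\{|\theta_\omega(x)-\theta_\omega(y)|/|x-y|:\omega\in\mathcal B_\nu,\ x,y\in H,\ x\ne y\}$ for $\nu\ge1$. Then for every $k\ge1$, every $\omega\in\mathcal B_k$ and every $x\in\bar H$, $$|D^2\theta_\omega(x)|\le M_0\sum_{j=0}^{k-1}\epsilon_j^2\,\epsilon_{k-j-1}.$$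
   Context: $D=d/dx$. $\mathcal B_\nu=\{(j_1,\ldots,j_\nu):j_k\in\mathcal B\}$ and $\theta_{(j_1,\ldots,j_\nu)}=\theta_{j_\nu}\circ\cdots\circ\theta_{j_1}$. $C^m(\bar H)$ denotes real $C^m$ functions on $H$ whose derivatives of order $\le m$ extend continuously to $\bar H$. *)

theory Defs
  imports "HOL-Analysis.Analysis"
begin

definition union_intervals :: "nat \<Rightarrow> (nat \<Rightarrow> real) \<Rightarrow> (nat \<Rightarrow> real) \<Rightarrow> real set" where
  "union_intervals n c d = (\<Union>j\<in>{1..n}. {c j<..<d j})"

definition Cm_bar :: "nat \<Rightarrow> real set \<Rightarrow> (real \<Rightarrow> real) \<Rightarrow> bool" where
  "Cm_bar m H f \<longleftrightarrow>
     continuous_on (closure H) f \<and>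
     (\<forall>k<m. \<forall>x\<in>H. ((deriv ^^ k) f has_real_derivative (deriv ^^ Suc k) f x) (at x)) \<and>
     (\<forall>k\<le>m. \<exists>g. continuous_on (closure H) g \<and> (\<forall>x\<in>H. g x = (deriv ^^ k) f x))"

text \<open>k-th derivative on closure H: the value at x of the continuous extension of
  the k-th derivative from H.\<close>
definition Dbar :: "real set \<Rightarrow> nat \<Rightarrow> (real \<Rightarrow> real) \<Rightarrow> real \<Rightarrow> real" where
  "Dbar H k f x = Lim (at x within H) ((deriv ^^ k) f)"

text \<open>theta_(j1,...,jnu) = theta_jnu o ... o theta_j1, words given as lists [j1,...,jnu].\<close>
definition theta_word :: "('b \<Rightarrow> real \<Rightarrow> real) \<Rightarrow> 'b list \<Rightarrow> real \<Rightarrow> real" where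
  "theta_word \<theta> \<omega> = fold (\<lambda>j g. \<theta> j \<circ> g) \<omega> id"

definition words :: "'b set \<Rightarrow> nat \<Rightarrow> 'b list set" where
  "words B \<nu> = {\<omega>. length \<omega> = \<nu> \<and> set \<omega> \<subseteq> B}"

definition M0 :: "real set \<Rightarrow> 'b set \<Rightarrow> ('b \<Rightarrow> real \<Rightarrow> real) \<Rightarrow> real" where
  "M0 H B \<theta> = Sup {\<bar>Dbar H 2 (\<theta> \<beta>) x\<bar> | \<beta> x. \<beta> \<in> B \<and> x \<in> closure H}"

definition eps :: "real set \<Rightarrow> 'b set \<Rightarrow> ('b \<Rightarrow> real \<Rightarrow> real) \<Rightarrow> nat \<Rightarrow> real" where
  "eps H B \<theta> \<nu> = (if \<nu> = 0 then 1 else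
     Sup {\<bar>theta_word \<theta> \<omega> x - theta_word \<theta> \<omega> y\<bar> / \<bar>x - y\<bar> | \<omega> x y.
            \<omega> \<in> words B \<nu> \<and> x \<in> H \<and> y \<in> H \<and> x \<noteq> y})"

end

theory Submission
  imports Defs
begin

(* By the chain rule, the second derivative of a word map theta_w, w = (j_1, ..., j_k), is

     sum_i  theta_{j_i}''(theta_u y) * (theta_u'(y))^2 * theta_v'(theta_{u j_i} y),

   where u = (j_1, ..., j_(i-1)) and v = (j_(i+1), ..., j_k) are the prefix and suffix around
   position i. The first derivative of a word map of length nu is a limit of its difference
   quotients, hence bounded by eps_nu, and theta_{j_i}'' is bounded by M0; the estimate passes
   from H to its closure because the second derivative extends continuously. The suprema eps_nu
   are finite since every word map is Lipschitz on H: its derivative is bounded, and distinct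
   intervals of H lie a positive distance apart. *)

lemma Cm_bar_mono: "Cm_bar m H f \<Longrightarrow> k \<le> m \<Longrightarrow> Cm_bar k H f"
  unfolding Cm_bar_def by auto

lemma Cm_bar_1_iff:
  "Cm_bar 1 H f \<longleftrightarrow> continuous_on (closure H) f \<and>
     (\<forall>x\<in>H. (f has_real_derivative deriv f x) (at x)) \<and>
     (\<exists>g. continuous_on (closure H) g \<and> (\<forall>x\<in>H. g x = deriv f x))"
  unfolding Cm_bar_def by (auto simp: le_Suc_eq)

lemma Cm_bar_2_iff:
  "Cm_bar 2 H f \<longleftrightarrow> continuous_on (closure H) f \<and>
     (\<forall>x\<in>H. (f has_real_derivative deriv f x) (at x) \<and>
             (deriv f has_real_derivative deriv (deriv f) x) (at x)) \<and>
     (\<exists>g. continuous_on (closure H) g \<and> (\<forall>x\<in>H. g x = deriv f x)) \<and>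
     (\<exists>g. continuous_on (closure H) g \<and> (\<forall>x\<in>H. g x = deriv (deriv f) x))"
proof -
  have lt2: "(\<forall>k<2. P k) \<longleftrightarrow> P 0 \<and> P 1" for P :: "nat \<Rightarrow> bool"
    by (auto simp: less_2_cases_iff)
  have le2: "(\<forall>k\<le>2. P k) \<longleftrightarrow> P 0 \<and> P 1 \<and> P 2" for P :: "nat \<Rightarrow> bool"
    by (auto simp: le_Suc_eq numeral_2_eq_2)
  show ?thesis
    unfolding Cm_bar_def lt2 le2 by (auto simp: numeral_2_eq_2)
qed

lemma Cm_bar_2_id: "Cm_bar 2 H id"
  unfolding Cm_bar_2_iff by (auto simp: id_def intro: continuous_on_const)

lemma Cm_bar_2_DERIV_comp:
  assumes H: "open H" and f: "Cm_bar 2 H f" and g: "Cm_bar 2 H g" "g ` H \<subseteq> H" and y: "y \<in> H"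
  shows "((f \<circ> g) has_real_derivative deriv f (g y) * deriv g y) (at y)"
    and "(deriv (f \<circ> g) has_real_derivative
           deriv (deriv f) (g y) * (deriv g y)\<^sup>2 + deriv f (g y) * deriv (deriv g) y) (at y)"
proof -
  have gy: "g y \<in> H" using g(2) y by blast
  have Df: "(f has_real_derivative deriv f z) (at z)"
    and D2f: "(deriv f has_real_derivative deriv (deriv f) z) (at z)" if "z \<in> H" for z
    using f that unfolding Cm_bar_2_iff by blast+
  have Dg: "(g has_real_derivative deriv g z) (at z)"
    and D2g: "(deriv g has_real_derivative deriv (deriv g) z) (at z)" if "z \<in> H" for z
    using g(1) that unfolding Cm_bar_2_iff by blast+
  have chain: "((f \<circ> g) has_real_derivative deriv f (g z) * deriv g z) (at z)" if "z \<in> H" for z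
    using DERIV_chain[OF Df Dg] g(2) that by blast
  then show "((f \<circ> g) has_real_derivative deriv f (g y) * deriv g y) (at y)"
    using y .
  have "((\<lambda>z. deriv f (g z) * deriv g z) has_real_derivative
          deriv (deriv f) (g y) * (deriv g y)\<^sup>2 + deriv f (g y) * deriv (deriv g) y) (at y)"
    using DERIV_mult[OF DERIV_chain2[OF D2f[OF gy] Dg[OF y]] D2g[OF y]]
    by (simp add: power2_eq_square algebra_simps)
  then show "(deriv (f \<circ> g) has_real_derivative
           deriv (deriv f) (g y) * (deriv g y)\<^sup>2 + deriv f (g y) * deriv (deriv g) y) (at y)"
    by (rule has_field_derivative_transform_within_open[OF _ H y])
      (use DERIV_imp_deriv[OF chain] in simp)
qed

lemma Cm_bar_2_comp:
  assumes H: "open H" and f: "Cm_bar 2 H f" and g: "Cm_bar 2 H g" "g ` H \<subseteq> H"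
  shows "Cm_bar 2 H (f \<circ> g)"
proof -
  note D = Cm_bar_2_DERIV_comp[OF H f g]
  obtain f1 f2 where f12: "continuous_on (closure H) f1" "\<forall>x\<in>H. f1 x = deriv f x"
      "continuous_on (closure H) f2" "\<forall>x\<in>H. f2 x = deriv (deriv f) x"
    using f unfolding Cm_bar_2_iff by blast
  obtain g1 g2 where g12: "continuous_on (closure H) g1" "\<forall>x\<in>H. g1 x = deriv g x"
      "continuous_on (closure H) g2" "\<forall>x\<in>H. g2 x = deriv (deriv g) x"
    using g(1) unfolding Cm_bar_2_iff by blast
  have g_cont: "continuous_on (closure H) g"
    using g(1) unfolding Cm_bar_2_iff by blast
  have g_closure: "g ` closure H \<subseteq> closure H"
    by (rule image_closure_subset[OF g_cont closed_closure]) (use g(2) closure_subset in blast)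
  have comp: "continuous_on (closure H) (h \<circ> g)" if "continuous_on (closure H) h" for h :: "real \<Rightarrow> real"
    by (rule continuous_on_compose[OF g_cont continuous_on_subset[OF that g_closure]])
  have fg_cont: "continuous_on (closure H) (f \<circ> g)"
    using f by (intro comp) (simp add: Cm_bar_2_iff)
  have deriv_fg: "deriv (f \<circ> g) x = f1 (g x) * g1 x"
    and deriv2_fg: "deriv (deriv (f \<circ> g)) x = f2 (g x) * (g1 x)\<^sup>2 + f1 (g x) * g2 x"
    if x: "x \<in> H" for x
    using DERIV_imp_deriv[OF D(1)[OF x]] DERIV_imp_deriv[OF D(2)[OF x]] f12 g12 g(2) x by auto
  have "continuous_on (closure H) (\<lambda>x. f1 (g x) * g1 x)"
    and "continuous_on (closure H) (\<lambda>x. f2 (g x) * (g1 x)\<^sup>2 + f1 (g x) * g2 x)"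
    using comp[OF f12(1)] comp[OF f12(3)] g12(1,3) unfolding o_def
    by (auto intro!: continuous_on_mult continuous_on_add continuous_on_power)
  then have "\<exists>h. continuous_on (closure H) h \<and> (\<forall>x\<in>H. h x = deriv (f \<circ> g) x)"
    and "\<exists>h. continuous_on (closure H) h \<and> (\<forall>x\<in>H. h x = deriv (deriv (f \<circ> g)) x)"
    using deriv_fg deriv2_fg by (metis (no_types, lifting))+
  moreover have "((f \<circ> g) has_real_derivative deriv (f \<circ> g) x) (at x)"
    and "(deriv (f \<circ> g) has_real_derivative deriv (deriv (f \<circ> g)) x) (at x)" if "x \<in> H" for x
    using D(1)[OF that] D(2)[OF that] by (simp_all only: DERIV_imp_deriv)
  ultimately show ?thesis
    unfolding Cm_bar_2_iff using fg_cont by blast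
qed

lemma Dbar_eq_continuous_extension:
  assumes H: "open H" and g: "continuous_on (closure H) g" "\<forall>y\<in>H. g y = (deriv ^^ k) f y"
    and x: "x \<in> closure H"
  shows "Dbar H k f x = g x"
proof -
  have "(g \<longlongrightarrow> g x) (at x within H)"
    using g(1) x closure_subset unfolding continuous_on_def by (blast intro: tendsto_within_subset)
  then have "((deriv ^^ k) f \<longlongrightarrow> g x) (at x within H)"
    by (rule Lim_transform_eventually) (use g(2) in \<open>auto simp: eventually_at_filter\<close>)
  moreover have "x islimpt H"
    using islimpt_closure_open[OF H refl x] by (simp add: limpt_of_closure)
  ultimately show ?thesis
    unfolding Dbar_def by (intro tendsto_Lim) (auto simp: trivial_limit_within)
qed

lemma Dbar_eq_deriv:
  assumes "open H" "Cm_bar m H f" "k \<le> m" "x \<in> H"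
  shows "Dbar H k f x = (deriv ^^ k) f x"
proof -
  obtain g where g: "continuous_on (closure H) g" "\<forall>y\<in>H. g y = (deriv ^^ k) f y"
    using assms(2,3) unfolding Cm_bar_def by blast
  have "x \<in> closure H"
    using assms(4) closure_subset by blast
  with g assms(4) show ?thesis
    using Dbar_eq_continuous_extension[OF assms(1) g] by simp
qed

lemma abs_Dbar_le:
  assumes "open H" "Cm_bar m H f" "k \<le> m" "\<forall>y\<in>H. \<bar>(deriv ^^ k) f y\<bar> \<le> C" "x \<in> closure H"
  shows "\<bar>Dbar H k f x\<bar> \<le> C"
proof -
  obtain g where g: "continuous_on (closure H) g" "\<forall>y\<in>H. g y = (deriv ^^ k) f y"
    using assms(2,3) unfolding Cm_bar_def by blast
  have "\<bar>g x\<bar> \<le> C"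
    using continuous_on_closure_norm_le[OF g(1) _ assms(5), of C] g(2) assms(4) by simp
  then show ?thesis
    using Dbar_eq_continuous_extension[OF assms(1) g assms(5)] by simp
qed

lemma Dbar_bounded:
  assumes "open H" "bounded H" "Cm_bar m H f" "k \<le> m"
  shows "bdd_above ((\<lambda>x. \<bar>Dbar H k f x\<bar>) ` closure H)"
proof -
  obtain g where g: "continuous_on (closure H) g" "\<forall>y\<in>H. g y = (deriv ^^ k) f y"
    using assms(3,4) unfolding Cm_bar_def by blast
  obtain C where "\<And>x. x \<in> closure H \<Longrightarrow> norm (g x) \<le> C"
    using continuous_on_compact_bound[OF _ g(1)] assms(2) by (metis compact_closure)
  then show ?thesis
    using Dbar_eq_continuous_extension[OF assms(1) g] by (auto intro!: bdd_aboveI2)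
qed

lemma DERIV_abs_le_difference_quotient_bound:
  fixes f :: "real \<Rightarrow> real"
  assumes "(f has_real_derivative D) (at y)" "open S" "y \<in> S"
    and "\<And>x. x \<in> S \<Longrightarrow> x \<noteq> y \<Longrightarrow> \<bar>f x - f y\<bar> / \<bar>x - y\<bar> \<le> C"
  shows "\<bar>D\<bar> \<le> C"
proof (rule tendsto_upperbound)
  show "((\<lambda>x. \<bar>(f x - f y) / (x - y)\<bar>) \<longlongrightarrow> \<bar>D\<bar>) (at y)"
    using assms(1) unfolding has_field_derivative_iff by (rule tendsto_rabs)
  show "\<forall>\<^sub>F x in at y. \<bar>(f x - f y) / (x - y)\<bar> \<le> C"
    using eventually_at_in_open[OF assms(2,3)] by eventually_elim (simp add: assms(4))
qed simp

lemma abs_mult_square_mult_le: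
  fixes a b c A E F :: "'a :: linordered_idom"
  assumes "\<bar>a\<bar> \<le> A" "\<bar>b\<bar> \<le> E" "\<bar>c\<bar> \<le> F"
  shows "\<bar>a * b\<^sup>2 * c\<bar> \<le> A * E\<^sup>2 * F"
proof -
  have "b\<^sup>2 \<le> E\<^sup>2"
    using power_mono[OF assms(2), of 2] by simp
  then have "\<bar>a\<bar> * b\<^sup>2 \<le> A * E\<^sup>2"
    using assms(1) by (intro mult_mono) auto
  then have "\<bar>a\<bar> * b\<^sup>2 * \<bar>c\<bar> \<le> A * E\<^sup>2 * F"
    by (rule mult_mono[OF _ assms(3)]) (use assms(1) in auto)
  then show ?thesis
    by (simp add: abs_mult)
qed

lemma open_union_intervals: "open (union_intervals n c d)"
  unfolding union_intervals_def by (intro open_UN) auto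

lemma bounded_union_intervals: "bounded (union_intervals n c d)"
  unfolding union_intervals_def by (intro bounded_UN) auto

lemma disjoint_intervals_separated:
  fixes n :: nat and c d :: "nat \<Rightarrow> real"
  assumes disj: "\<forall>i\<in>{1..n}. \<forall>j\<in>{1..n}. i \<noteq> j \<longrightarrow> {c i..d i} \<inter> {c j..d j} = {}"
  obtains \<delta> :: real where "\<delta> > 0"
    "\<And>i j x y. i \<in> {1..n} \<Longrightarrow> j \<in> {1..n} \<Longrightarrow> i \<noteq> j \<Longrightarrow> x \<in> {c i..d i} \<Longrightarrow> y \<in> {c j..d j}
       \<Longrightarrow> \<delta> \<le> \<bar>x - y\<bar>"
proof -
  define K where "K = (\<Union>i\<in>{1..n}. \<Union>j\<in>{1..n} - {i}. {x - y | x y. x \<in> {c i..d i} \<and> y \<in> {c j..d j}})"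
  have "compact K"
    unfolding K_def by (intro compact_UN compact_differences) auto
  moreover have "0 \<notin> K"
    using disj unfolding K_def by fastforce
  ultimately obtain \<delta> where \<delta>: "\<delta> > 0" "\<forall>z\<in>K. \<delta> \<le> dist 0 z"
    using separate_point_closed compact_imp_closed by metis
  show thesis
  proof (rule that[OF \<delta>(1)])
    fix i j x y
    assume "i \<in> {1..n}" "j \<in> {1..n}" "i \<noteq> j" "x \<in> {c i..d i}" "y \<in> {c j..d j}"
    then have "x - y \<in> K"
      unfolding K_def by blast
    then show "\<delta> \<le> \<bar>x - y\<bar>"
      using \<delta>(2) by (simp add: dist_real_def)
  qed
qed

lemma lipschitz_on_union_intervals:
  fixes n :: nat and c d :: "nat \<Rightarrow> real"
  assumes disj: "\<forall>i\<in>{1..n}. \<forall>j\<in>{1..n}. i \<noteq> j \<longrightarrow> {c i..d i} \<inter> {c j..d j} = {}"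
    and f: "Cm_bar 1 (union_intervals n c d) f"
  obtains L where "L-lipschitz_on (union_intervals n c d) f"
proof -
  let ?H = "union_intervals n c d"
  have compact: "compact (closure ?H)"
    by (simp add: bounded_union_intervals)
  obtain f1 where f1: "continuous_on (closure ?H) f1" "\<forall>x\<in>?H. f1 x = deriv f x"
    using f unfolding Cm_bar_1_iff by blast
  obtain L0 where L0: "\<And>x. x \<in> closure ?H \<Longrightarrow> \<bar>f x\<bar> \<le> L0"
    using continuous_on_compact_bound[OF compact] f unfolding Cm_bar_1_iff by (metis real_norm_def)
  obtain L1 where L1: "L1 \<ge> 0" "\<And>x. x \<in> closure ?H \<Longrightarrow> \<bar>f1 x\<bar> \<le> L1"
    using continuous_on_compact_bound[OF compact f1(1)] by (metis real_norm_def)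
  obtain \<delta> :: real where \<delta>: "\<delta> > 0"
    "\<And>i j x y. i \<in> {1..n} \<Longrightarrow> j \<in> {1..n} \<Longrightarrow> i \<noteq> j \<Longrightarrow> x \<in> {c i..d i} \<Longrightarrow> y \<in> {c j..d j}
       \<Longrightarrow> \<delta> \<le> \<bar>x - y\<bar>"
    using disjoint_intervals_separated[OF disj] by blast
  define L where "L = max L1 (2 * L0 / \<delta>)"
  have same_interval: "\<bar>f x - f y\<bar> \<le> L * \<bar>x - y\<bar>"
    if i: "i \<in> {1..n}" and xy: "x \<in> {c i<..<d i}" "y \<in> {c i<..<d i}" for i x y
  proof -
    have sub: "{c i<..<d i} \<subseteq> ?H"
      using i unfolding union_intervals_def by blast
    have "(f has_real_derivative deriv f z) (at z within {c i<..<d i})" if "z \<in> {c i<..<d i}" for z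
      using f sub that unfolding Cm_bar_1_iff by (blast intro: has_field_derivative_at_within)
    moreover have "\<bar>deriv f z\<bar> \<le> L" if "z \<in> {c i<..<d i}" for z
      using L1(2) f1(2) sub that closure_subset unfolding L_def by (metis subsetD max.coboundedI1)
    ultimately show ?thesis
      using field_differentiable_bound[of "{c i<..<d i}" f "deriv f" L x y] xy by simp
  qed
  have different_intervals: "\<bar>f x - f y\<bar> \<le> L * \<bar>x - y\<bar>"
    if ij: "i \<in> {1..n}" "j \<in> {1..n}" "i \<noteq> j" and xy: "x \<in> {c i<..<d i}" "y \<in> {c j<..<d j}"
    for i j x y
  proof -
    have "x \<in> ?H" "y \<in> ?H"
      using ij xy unfolding union_intervals_def by blast+
    then have "\<bar>f x\<bar> \<le> L0" "\<bar>f y\<bar> \<le> L0"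
      using L0 closure_subset by (metis subsetD)+
    then have "\<bar>f x - f y\<bar> \<le> 2 * L0 / \<delta> * \<delta>"
      using \<delta>(1) by simp
    also have "\<dots> \<le> L * \<bar>x - y\<bar>"
      using \<delta> ij xy L1(1) unfolding L_def by (intro mult_mono) auto
    finally show ?thesis .
  qed
  have "L-lipschitz_on ?H f"
  proof (rule lipschitz_onI)
    fix x y assume "x \<in> ?H" "y \<in> ?H"
    then obtain i j where "i \<in> {1..n}" "x \<in> {c i<..<d i}" "j \<in> {1..n}" "y \<in> {c j<..<d j}"
      unfolding union_intervals_def by blast
    then show "dist (f x) (f y) \<le> L * dist x y"
      using same_interval different_intervals unfolding dist_real_def by (cases "i = j") blast+
  qed (use L1(1) in \<open>simp add: L_def\<close>)
  then show thesis ..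
qed

lemma theta_word_Nil [simp]: "theta_word \<theta> [] = id"
  by (simp add: theta_word_def)

lemma theta_word_append: "theta_word \<theta> (u @ v) = theta_word \<theta> v \<circ> theta_word \<theta> u"
proof -
  have "fold (\<lambda>j g. \<theta> j \<circ> g) v h = fold (\<lambda>j g. \<theta> j \<circ> g) v id \<circ> h" for h :: "real \<Rightarrow> real"
  proof (induction v arbitrary: h)
    case (Cons a v)
    show ?case
      using Cons.IH[of "\<theta> a \<circ> h"] Cons.IH[of "\<theta> a"] by (simp add: o_assoc)
  qed simp
  then show ?thesis
    unfolding theta_word_def fold_append o_apply .
qed

lemma theta_word_snoc [simp]: "theta_word \<theta> (u @ [\<beta>]) = \<theta> \<beta> \<circ> theta_word \<theta> u"
  by (simp add: theta_word_append theta_word_def)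

locale C2_IFS =
  fixes H :: "real set" and B :: "'b set" and \<theta> :: "'b \<Rightarrow> real \<Rightarrow> real"
  assumes open_H: "open H"
    and C2_theta: "\<beta> \<in> B \<Longrightarrow> Cm_bar 2 H (\<theta> \<beta>)"
    and theta_maps_into: "\<beta> \<in> B \<Longrightarrow> \<theta> \<beta> ` H \<subseteq> H"
begin

lemma theta_word_maps_into: "set \<omega> \<subseteq> B \<Longrightarrow> theta_word \<theta> \<omega> ` H \<subseteq> H"
proof (induction \<omega> rule: rev_induct)
  case (snoc \<beta> w)
  then have "theta_word \<theta> w ` H \<subseteq> H" "\<theta> \<beta> ` H \<subseteq> H"
    using theta_maps_into by auto
  then show ?case
    by (metis theta_word_snoc image_comp image_mono order_trans)
qed simp

lemma C2_theta_word: "set \<omega> \<subseteq> B \<Longrightarrow> Cm_bar 2 H (theta_word \<theta> \<omega>)"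
proof (induction \<omega> rule: rev_induct)
  case (snoc \<beta> w)
  then have w: "set w \<subseteq> B" and \<beta>: "\<beta> \<in> B"
    by auto
  show ?case
    unfolding theta_word_snoc
    by (rule Cm_bar_2_comp[OF open_H C2_theta[OF \<beta>] snoc.IH[OF w] theta_word_maps_into[OF w]])
qed (simp add: Cm_bar_2_id)

lemma deriv_theta_word_append:
  assumes "set u \<subseteq> B" "set v \<subseteq> B" "y \<in> H"
  shows "deriv (theta_word \<theta> (u @ v)) y
           = deriv (theta_word \<theta> v) (theta_word \<theta> u y) * deriv (theta_word \<theta> u) y"
  unfolding theta_word_append
  by (rule DERIV_imp_deriv, rule Cm_bar_2_DERIV_comp(1)[OF open_H C2_theta_word[OF assms(2)]
      C2_theta_word[OF assms(1)] theta_word_maps_into[OF assms(1)] assms(3)])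

lemma deriv2_theta_word:
  assumes "set \<omega> \<subseteq> B" "y \<in> H"
  shows "deriv (deriv (theta_word \<theta> \<omega>)) y =
    (\<Sum>i<length \<omega>. deriv (deriv (\<theta> (\<omega> ! i))) (theta_word \<theta> (take i \<omega>) y)
       * (deriv (theta_word \<theta> (take i \<omega>)) y)\<^sup>2
       * deriv (theta_word \<theta> (drop (Suc i) \<omega>)) (theta_word \<theta> (take (Suc i) \<omega>) y))"
  using assms(1)
proof (induction \<omega> rule: rev_induct)
  case (snoc \<beta> w)
  define G where "G = theta_word \<theta> w"
  define T where "T = (\<lambda>\<omega> i. deriv (deriv (\<theta> (\<omega> ! i))) (theta_word \<theta> (take i \<omega>) y)
       * (deriv (theta_word \<theta> (take i \<omega>)) y)\<^sup>2
       * deriv (theta_word \<theta> (drop (Suc i) \<omega>)) (theta_word \<theta> (take (Suc i) \<omega>) y))"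
  have w: "set w \<subseteq> B" and \<beta>: "\<beta> \<in> B"
    using snoc.prems by auto
  have IH: "deriv (deriv G) y = (\<Sum>i<length w. T w i)"
    using snoc.IH[OF w] by (simp add: G_def T_def)
  have chain_rule: "deriv (deriv (theta_word \<theta> (w @ [\<beta>]))) y
          = deriv (deriv (\<theta> \<beta>)) (G y) * (deriv G y)\<^sup>2 + deriv (\<theta> \<beta>) (G y) * deriv (deriv G) y"
    unfolding theta_word_snoc G_def
    by (rule DERIV_imp_deriv, rule Cm_bar_2_DERIV_comp(2)[OF open_H C2_theta[OF \<beta>]
        C2_theta_word[OF w] theta_word_maps_into[OF w] assms(2)])
  have last_term: "T (w @ [\<beta>]) (length w) = deriv (deriv (\<theta> \<beta>)) (G y) * (deriv G y)\<^sup>2"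
    by (simp add: T_def G_def)
  have earlier_term: "T (w @ [\<beta>]) i = deriv (\<theta> \<beta>) (G y) * T w i" if "i < length w" for i
  proof -
    have "set (take (Suc i) w) \<subseteq> B" "set (drop (Suc i) w) \<subseteq> B"
      using w by (auto dest: in_set_takeD in_set_dropD)
    moreover have "theta_word \<theta> (take (Suc i) w) y \<in> H"
      using theta_word_maps_into[OF \<open>set (take (Suc i) w) \<subseteq> B\<close>] assms(2) by blast
    ultimately have "deriv (theta_word \<theta> (drop (Suc i) w @ [\<beta>])) (theta_word \<theta> (take (Suc i) w) y)
      = deriv (\<theta> \<beta>) (G y) * deriv (theta_word \<theta> (drop (Suc i) w)) (theta_word \<theta> (take (Suc i) w) y)"
      using deriv_theta_word_append[of "drop (Suc i) w" "[\<beta>]"] \<beta>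
        theta_word_append[of \<theta> "take (Suc i) w" "drop (Suc i) w"]
      by (simp add: G_def theta_word_def)
    with that show ?thesis
      by (simp add: T_def nth_append)
  qed
  have "(\<Sum>i<length w. T (w @ [\<beta>]) i) = (\<Sum>i<length w. deriv (\<theta> \<beta>) (G y) * T w i)"
    by (rule sum.cong) (simp_all add: earlier_term)
  then have "deriv (deriv (theta_word \<theta> (w @ [\<beta>]))) y = (\<Sum>i<length (w @ [\<beta>]). T (w @ [\<beta>]) i)"
    unfolding chain_rule IH by (simp add: last_term sum_distrib_left)
  then show ?case
    unfolding T_def .
qed simp

end

locale interval_C2_IFS = C2_IFS +
  fixes n :: nat and c d :: "nat \<Rightarrow> real"
  assumes H_eq: "H = union_intervals n c d"
    and disjoint_closures: "\<forall>i\<in>{1..n}. \<forall>j\<in>{1..n}. i \<noteq> j \<longrightarrow> {c i..d i} \<inter> {c j..d j} = {}"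
    and finite_B: "finite B"
begin

lemma lipschitz_on_theta_word:
  assumes "set \<omega> \<subseteq> B"
  obtains L where "L-lipschitz_on H (theta_word \<theta> \<omega>)"
  using lipschitz_on_union_intervals[OF disjoint_closures] Cm_bar_mono[OF C2_theta_word[OF assms]]
  unfolding H_eq by (metis one_le_numeral)

lemma bdd_above_difference_quotients:
  "bdd_above {\<bar>theta_word \<theta> \<omega> x - theta_word \<theta> \<omega> y\<bar> / \<bar>x - y\<bar> | \<omega> x y.
                \<omega> \<in> words B \<nu> \<and> x \<in> H \<and> y \<in> H \<and> x \<noteq> y}"
proof -
  have "\<exists>L. L-lipschitz_on H (theta_word \<theta> \<omega>)" if "\<omega> \<in> words B \<nu>" for \<omega>
    using lipschitz_on_theta_word that unfolding words_def by blast
  then obtain L where L: "\<And>\<omega>. \<omega> \<in> words B \<nu> \<Longrightarrow> (L \<omega>)-lipschitz_on H (theta_word \<theta> \<omega>)"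
    by metis
  have finite_words: "finite (words B \<nu>)"
    using finite_lists_length_eq[OF finite_B, of \<nu>] unfolding words_def by (simp add: conj_commute)
  have "\<bar>theta_word \<theta> \<omega> x - theta_word \<theta> \<omega> y\<bar> / \<bar>x - y\<bar> \<le> (\<Sum>\<omega>'\<in>words B \<nu>. L \<omega>')"
    if "\<omega> \<in> words B \<nu>" "x \<in> H" "y \<in> H" "x \<noteq> y" for \<omega> x y
  proof -
    have "\<bar>theta_word \<theta> \<omega> x - theta_word \<theta> \<omega> y\<bar> \<le> L \<omega> * \<bar>x - y\<bar>"
      using lipschitz_onD[OF L[OF that(1)] that(2,3)] by (simp add: dist_real_def)
    then have "\<bar>theta_word \<theta> \<omega> x - theta_word \<theta> \<omega> y\<bar> / \<bar>x - y\<bar> \<le> L \<omega>"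
      using that(4) by (simp add: divide_le_eq)
    also have "\<dots> \<le> (\<Sum>\<omega>'\<in>words B \<nu>. L \<omega>')"
      by (rule member_le_sum) (use that(1) finite_words L lipschitz_on_nonneg in auto)
    finally show ?thesis .
  qed
  then show ?thesis
    unfolding bdd_above_def by blast
qed

lemma abs_deriv_theta_word_le_eps:
  assumes \<omega>: "set \<omega> \<subseteq> B" and y: "y \<in> H"
  shows "\<bar>deriv (theta_word \<theta> \<omega>) y\<bar> \<le> eps H B \<theta> (length \<omega>)"
proof (cases "\<omega> = []")
  case False
  have "(theta_word \<theta> \<omega> has_real_derivative deriv (theta_word \<theta> \<omega>) y) (at y)"
    using C2_theta_word[OF \<omega>] y unfolding Cm_bar_2_iff by blast
  then show ?thesis
  proof (rule DERIV_abs_le_difference_quotient_bound[OF _ open_H y])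
    fix x assume "x \<in> H" "x \<noteq> y"
    with \<omega> y False show "\<bar>theta_word \<theta> \<omega> x - theta_word \<theta> \<omega> y\<bar> / \<bar>x - y\<bar> \<le> eps H B \<theta> (length \<omega>)"
      unfolding eps_def using bdd_above_difference_quotients
      by (auto intro!: cSup_upper simp: words_def)
  qed
qed (simp add: eps_def)

lemma abs_deriv2_theta_le_M0:
  assumes \<beta>: "\<beta> \<in> B" and y: "y \<in> H"
  shows "\<bar>deriv (deriv (\<theta> \<beta>)) y\<bar> \<le> M0 H B \<theta>"
proof -
  have "{\<bar>Dbar H 2 (\<theta> \<beta>) x\<bar> | \<beta> x. \<beta> \<in> B \<and> x \<in> closure H}
          = (\<Union>\<beta>\<in>B. (\<lambda>x. \<bar>Dbar H 2 (\<theta> \<beta>) x\<bar>) ` closure H)"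
    by blast
  moreover have "bounded H"
    unfolding H_eq by (rule bounded_union_intervals)
  ultimately have "bdd_above {\<bar>Dbar H 2 (\<theta> \<beta>) x\<bar> | \<beta> x. \<beta> \<in> B \<and> x \<in> closure H}"
    using Dbar_bounded[OF open_H _ C2_theta order_refl] finite_B by simp
  moreover have "\<bar>deriv (deriv (\<theta> \<beta>)) y\<bar> = \<bar>Dbar H 2 (\<theta> \<beta>) y\<bar>"
    using Dbar_eq_deriv[OF open_H C2_theta[OF \<beta>] order_refl y] by (simp add: numeral_2_eq_2)
  ultimately show ?thesis
    unfolding M0_def using \<beta> y closure_subset by (auto intro!: cSup_upper)
qed

lemma abs_Dbar2_theta_word_le:
  assumes \<omega>: "set \<omega> \<subseteq> B" and x: "x \<in> closure H"
  shows "\<bar>Dbar H 2 (theta_word \<theta> \<omega>) x\<bar>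
           \<le> M0 H B \<theta> * (\<Sum>j<length \<omega>. (eps H B \<theta> j)\<^sup>2 * eps H B \<theta> (length \<omega> - j - 1))"
proof (rule abs_Dbar_le[OF open_H C2_theta_word[OF \<omega>] order_refl _ x], intro ballI)
  fix y assume y: "y \<in> H"
  have term_le: "\<bar>deriv (deriv (\<theta> (\<omega> ! i))) (theta_word \<theta> (take i \<omega>) y)
       * (deriv (theta_word \<theta> (take i \<omega>)) y)\<^sup>2
       * deriv (theta_word \<theta> (drop (Suc i) \<omega>)) (theta_word \<theta> (take (Suc i) \<omega>) y)\<bar>
      \<le> M0 H B \<theta> * (eps H B \<theta> i)\<^sup>2 * eps H B \<theta> (length \<omega> - i - 1)"
    if i: "i < length \<omega>" for i
  proof -
    have take: "set (take j \<omega>) \<subseteq> B" and drop: "set (drop j \<omega>) \<subseteq> B" for j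
      using \<omega> by (auto dest: in_set_takeD in_set_dropD)
    have in_H: "theta_word \<theta> (take j \<omega>) y \<in> H" for j
      using theta_word_maps_into[OF take] y by blast
    have "\<bar>deriv (deriv (\<theta> (\<omega> ! i))) (theta_word \<theta> (take i \<omega>) y)\<bar> \<le> M0 H B \<theta>"
      using abs_deriv2_theta_le_M0[OF _ in_H] nth_mem[OF i] \<omega> by blast
    moreover have "\<bar>deriv (theta_word \<theta> (take i \<omega>)) y\<bar> \<le> eps H B \<theta> i"
      using abs_deriv_theta_word_le_eps[OF take y, of i] i by simp
    moreover have "\<bar>deriv (theta_word \<theta> (drop (Suc i) \<omega>)) (theta_word \<theta> (take (Suc i) \<omega>) y)\<bar>
                     \<le> eps H B \<theta> (length \<omega> - i - 1)"
      using abs_deriv_theta_word_le_eps[OF drop in_H, of "Suc i"] by simp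
    ultimately show ?thesis
      by (rule abs_mult_square_mult_le)
  qed
  have "\<bar>(deriv ^^ 2) (theta_word \<theta> \<omega>) y\<bar>
      = \<bar>\<Sum>i<length \<omega>. deriv (deriv (\<theta> (\<omega> ! i))) (theta_word \<theta> (take i \<omega>) y)
           * (deriv (theta_word \<theta> (take i \<omega>)) y)\<^sup>2
           * deriv (theta_word \<theta> (drop (Suc i) \<omega>)) (theta_word \<theta> (take (Suc i) \<omega>) y)\<bar>"
    using deriv2_theta_word[OF \<omega> y] by (simp add: numeral_2_eq_2)
  also have "\<dots> \<le> (\<Sum>i<length \<omega>. \<bar>deriv (deriv (\<theta> (\<omega> ! i))) (theta_word \<theta> (take i \<omega>) y)
           * (deriv (theta_word \<theta> (take i \<omega>)) y)\<^sup>2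
           * deriv (theta_word \<theta> (drop (Suc i) \<omega>)) (theta_word \<theta> (take (Suc i) \<omega>) y)\<bar>)"
    by (rule sum_abs)
  also have "\<dots> \<le> (\<Sum>i<length \<omega>. M0 H B \<theta> * (eps H B \<theta> i)\<^sup>2 * eps H B \<theta> (length \<omega> - i - 1))"
    by (rule sum_mono, rule term_le) simp
  also have "\<dots> = M0 H B \<theta> * (\<Sum>j<length \<omega>. (eps H B \<theta> j)\<^sup>2 * eps H B \<theta> (length \<omega> - j - 1))"
    by (simp add: sum_distrib_left mult.assoc)
  finally show "\<bar>(deriv ^^ 2) (theta_word \<theta> \<omega>) y\<bar>
      \<le> M0 H B \<theta> * (\<Sum>j<length \<omega>. (eps H B \<theta> j)\<^sup>2 * eps H B \<theta> (length \<omega> - j - 1))" .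
qed

end

theorem lemma6p2:
  fixes n :: nat and c d :: "nat \<Rightarrow> real" and B :: "'b set" and m :: nat
    and b \<theta> :: "'b \<Rightarrow> real \<Rightarrow> real" and H :: "real set"
  assumes H_def: "H = union_intervals n c d"
    and cd: "\<forall>j\<in>{1..n}. c j < d j"
    and disj: "\<forall>i\<in>{1..n}. \<forall>j\<in>{1..n}. i \<noteq> j \<longrightarrow> {c i..d i} \<inter> {c j..d j} = {}"
    and finB: "finite B"
    and m2: "m \<ge> 2"
    and b_reg: "\<forall>\<beta>\<in>B. Cm_bar m H (b \<beta>)"
    and theta_reg: "\<forall>\<beta>\<in>B. Cm_bar m H (\<theta> \<beta>)"
    and b_pos: "\<forall>\<beta>\<in>B. \<forall>x\<in>closure H. b \<beta> x > 0"
    and theta_maps: "\<forall>\<beta>\<in>B. \<theta> \<beta> ` H \<subseteq> H"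
    and contr: "\<exists>\<mu>::nat. \<exists>\<kappa>::real. \<mu> \<ge> 1 \<and> \<kappa> < 1 \<and>
       (\<forall>\<omega>\<in>words B \<mu>. \<forall>x\<in>closure H. \<forall>y\<in>closure H.
          \<bar>theta_word \<theta> \<omega> x - theta_word \<theta> \<omega> y\<bar> \<le> \<kappa> * \<bar>x - y\<bar>)"
  shows "\<forall>k\<ge>1. \<forall>\<omega>\<in>words B k. \<forall>x\<in>closure H.
           \<bar>Dbar H 2 (theta_word \<theta> \<omega>) x\<bar>
             \<le> M0 H B \<theta> * (\<Sum>j<k. (eps H B \<theta> j)\<^sup>2 * eps H B \<theta> (k - j - 1))"
proof -
  interpret interval_C2_IFS H B \<theta> n c d
    using H_def disj finB theta_maps theta_reg m2
    by unfold_locales (auto simp: open_union_intervals intro: Cm_bar_mono)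
  show ?thesis
  proof (intro allI impI ballI)
    fix k \<omega> x
    assume "\<omega> \<in> words B k" and x: "x \<in> closure H"
    then have \<omega>: "set \<omega> \<subseteq> B" and k: "length \<omega> = k"
      unfolding words_def by auto
    show "\<bar>Dbar H 2 (theta_word \<theta> \<omega>) x\<bar>
            \<le> M0 H B \<theta> * (\<Sum>j<k. (eps H B \<theta> j)\<^sup>2 * eps H B \<theta> (k - j - 1))"
      using abs_Dbar2_theta_word_le[OF \<omega> x] by (simp only: k)
  qed
qed

end
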